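(* Let $(E,\delta)$ be a non-empty separable metric space, let $M\in\mathbb N$, $\varepsilon,L,D\in(0,\infty)$, let $(\Omega,\mathcal F,\mathbb P)$ be a probability space, for every $x\in E$ let $Y_{x,1},\dots,Y_{x,M}\colon\Omega\to[0,D]$ be independent random variables, assume $|Y_{x,m}-Y_{y,m}|\le L\delta(x,y)$ for all $x,y\in E$, $m\in\{1,\dots,M\}$, and let $Z_x=\frac1M\sum_{m=1}^MY_{x,m}$ for $x\in E$. Then (i) $\mathbb E[|Z_x|]\le D<\infty$ for all $x\in E$; (ii) $\Omega\ni\eta\mapsto\sup_{x\in E}|Z_x(\eta)-\mathbb E[Z_x]|\in[0,\infty]$ is $\mathcal F/\mathcal B([0,\infty])$-measurable; (iii) $$\mathbb P\bigl(\sup_{x\in E}|Z_x-\mathbb E[Z_x]|\ge\varepsilon\bigr)\le 2\,\mathcal C_{(E,\delta),\frac{\varepsilon}{4L}}\exp\Bigl(\frac{-\varepsilon^2M}{2D^2}\Bigr).$$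
   Context: Covering number: for a metric space $(E,\delta)$ and $r\in[0,\infty]$, $\mathcal C_{(E,\delta),r}=\inf(\{n\in\mathbb N_0\colon\exists A\subseteq E \text{ with } |A|\le n \text{ and } \forall x\in E\ \exists a\in A\colon\delta(a,x)\le r\}\cup\{\infty\})$. *)

theory Defs
  imports "HOL-Analysis.Analysis" "HOL-Probability.Probability"
begin

definition covering_number :: "'a set \<Rightarrow> ('a \<Rightarrow> 'a \<Rightarrow> real) \<Rightarrow> real \<Rightarrow> enat" where
  "covering_number E \<delta> r =
     Inf ({enat n | n. \<exists>A. A \<subseteq> E \<and> finite A \<and> card A \<le> n \<and> (\<forall>x\<in>E. \<exists>a\<in>A. \<delta> a x \<le> r)}
          \<union> {\<infinity>})"

end

(* The deviation x |-> |Z_x - E Z_x| is pathwise 2L-Lipschitz, because each Y_(x,m), hence Z_x and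
   E Z_x, is L-Lipschitz in x. So its supremum over E equals the supremum over a countable dense
   subset, which gives measurability. If the supremum is at least eps, then some point a of a
   finite eps/(4L)-net has deviation at least eps/2; a union bound over the net combined with
   Hoeffding's inequality for each sample mean Z_a gives the tail estimate. *)
theory Submission
  imports Defs
begin

lemma covering_number_enatE:
  assumes "covering_number E \<delta> r = enat n"
  obtains A where "A \<subseteq> E" "finite A" "card A \<le> n" "\<forall>x\<in>E. \<exists>a\<in>A. \<delta> a x \<le> r"
proof -
  define S where "S = {enat n | n. \<exists>A. A \<subseteq> E \<and> finite A \<and> card A \<le> n \<and> (\<forall>x\<in>E. \<exists>a\<in>A. \<delta> a x \<le> r)} \<union> {\<infinity>}"
  have "\<infinity> \<in> S"
    unfolding S_def by simp
  then have "Inf S \<in> S"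
    unfolding Inf_enat_def by (auto intro: LeastI)
  with assms have "enat n \<in> S"
    unfolding covering_number_def S_def by simp
  with that show ?thesis
    unfolding S_def by auto
qed

lemma mean_in_atLeastAtMost:
  fixes f :: "'i \<Rightarrow> real"
  assumes "finite I" "I \<noteq> {}" "\<And>i. i \<in> I \<Longrightarrow> f i \<in> {a..b}"
  shows "(\<Sum>i\<in>I. f i) / card I \<in> {a..b}"
proof -
  have "card I * a \<le> (\<Sum>i\<in>I. f i)" "(\<Sum>i\<in>I. f i) \<le> card I * b"
    using sum_mono[of I "\<lambda>_. a" f] sum_mono[of I f "\<lambda>_. b"] assms(3) by auto
  moreover have "real (card I) > 0"
    using assms(1,2) by (simp add: card_gt_0_iff)
  ultimately show ?thesis
    by (simp add: field_simps)
qed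

lemma abs_mean_diff_le:
  fixes f g :: "'i \<Rightarrow> real"
  assumes "finite I" "I \<noteq> {}" "\<And>i. i \<in> I \<Longrightarrow> \<bar>f i - g i\<bar> \<le> c"
  shows "\<bar>(\<Sum>i\<in>I. f i) / card I - (\<Sum>i\<in>I. g i) / card I\<bar> \<le> c"
proof -
  have "\<bar>(\<Sum>i\<in>I. f i) / card I - (\<Sum>i\<in>I. g i) / card I\<bar> = \<bar>\<Sum>i\<in>I. f i - g i\<bar> / card I"
    by (simp add: sum_subtractf abs_divide flip: diff_divide_distrib)
  also have "\<dots> \<le> (\<Sum>i\<in>I. c) / card I"
    using assms by (intro divide_right_mono order_trans[OF sum_abs sum_mono]) auto
  also have "\<dots> = c"
    using assms by simp
  finally show ?thesis .
qed

lemma (in prob_space) abs_centered_le_abs_centered_add: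
  fixes X Y :: "'a \<Rightarrow> real"
  assumes "integrable M X" "integrable M Y"
    and close: "\<And>\<omega>. \<omega> \<in> space M \<Longrightarrow> \<bar>X \<omega> - Y \<omega>\<bar> \<le> c" and "\<omega> \<in> space M"
  shows "\<bar>X \<omega> - expectation X\<bar> \<le> \<bar>Y \<omega> - expectation Y\<bar> + 2 * c"
proof -
  have "\<bar>expectation X - expectation Y\<bar> = \<bar>expectation (\<lambda>\<omega>. X \<omega> - Y \<omega>)\<bar>"
    using assms by simp
  also have "\<dots> \<le> expectation (\<lambda>\<omega>. \<bar>X \<omega> - Y \<omega>\<bar>)"
    by (rule integral_abs_bound)
  also have "\<dots> \<le> c"
    using assms by (intro integral_le_const AE_I2) auto
  finally show ?thesis
    using close[OF \<open>\<omega> \<in> space M\<close>] by linarith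
qed

lemma (in prob_space) Hoeffding_sample_mean_abs_ge:
  fixes X :: "'i \<Rightarrow> 'a \<Rightarrow> real" and a b \<epsilon> :: real
  assumes "finite I" "I \<noteq> {}" "indep_vars (\<lambda>_. borel) X I"
    and "\<And>i. i \<in> I \<Longrightarrow> AE \<omega> in M. X i \<omega> \<in> {a..b}" "a < b" "\<epsilon> \<ge> 0"
  shows "prob {\<omega>\<in>space M. \<epsilon> \<le> \<bar>(\<Sum>i\<in>I. X i \<omega>) / card I - expectation (\<lambda>\<omega>. (\<Sum>i\<in>I. X i \<omega>) / card I)\<bar>}
         \<le> 2 * exp (-2 * real (card I) * \<epsilon>\<^sup>2 / (b - a)\<^sup>2)"
proof -
  define \<mu> where "\<mu> = (\<Sum>i\<in>I. expectation (X i))"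
  interpret Hoeffding_ineq M I X "\<lambda>_. a" "\<lambda>_. b" \<mu>
    by unfold_locales (use assms in \<open>auto simp: \<mu>_def\<close>)
  have n_pos: "real (card I) > 0"
    using assms by (simp add: card_gt_0_iff)
  have "expectation (\<lambda>\<omega>. (\<Sum>i\<in>I. X i \<omega>) / card I) = \<mu> / card I"
    unfolding \<mu>_def
    by (simp add: integral_sum interval_bounded_random_variable.integrable[OF bounded_random_variable])
  then have "{\<omega>\<in>space M. \<epsilon> \<le> \<bar>(\<Sum>i\<in>I. X i \<omega>) / card I - expectation (\<lambda>\<omega>. (\<Sum>i\<in>I. X i \<omega>) / card I)\<bar>}
      = {\<omega>\<in>space M. \<bar>(\<Sum>i\<in>I. X i \<omega>) - \<mu>\<bar> \<ge> card I * \<epsilon>}"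
    using n_pos by (auto simp: diff_divide_distrib[symmetric] field_simps)
  also have "prob \<dots> \<le> 2 * exp (-2 * (card I * \<epsilon>)\<^sup>2 / (\<Sum>i\<in>I. (b - a)\<^sup>2))"
    by (rule Hoeffding_ineq_abs_ge) (use assms n_pos in auto)
  also have "-2 * (card I * \<epsilon>)\<^sup>2 / (\<Sum>i\<in>I. (b - a)\<^sup>2) = -2 * real (card I) * \<epsilon>\<^sup>2 / (b - a)\<^sup>2"
    using n_pos by (simp add: power2_eq_square)
  finally show ?thesis .
qed

lemma ennreal_le_plus_ennreal:
  assumes "a \<le> b + e" "0 \<le> e"
  shows "ennreal a \<le> ennreal b + ennreal e"
proof (cases "b \<ge> 0")
  case True
  then show ?thesis
    using assms by (simp flip: ennreal_plus add: ennreal_leI)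
next
  case False
  then have "ennreal a \<le> ennreal e"
    using assms(1) by (intro ennreal_leI) linarith
  then show ?thesis
    by (simp add: add_increasing)
qed

context Metric_space
begin

lemma SUP_ennreal_closure_eq:
  assumes "C \<subseteq> M" "mtopology closure_of C = M" "K \<ge> 0"
    and lip: "\<And>x y. x \<in> M \<Longrightarrow> y \<in> M \<Longrightarrow> f x \<le> f y + K * d x y"
  shows "(\<Squnion>x\<in>M. ennreal (f x)) = (\<Squnion>x\<in>C. ennreal (f x))"
proof (rule antisym)
  show "(\<Squnion>x\<in>M. ennreal (f x)) \<le> (\<Squnion>x\<in>C. ennreal (f x))"
  proof (rule SUP_least)
    fix x assume x: "x \<in> M"
    show "ennreal (f x) \<le> (\<Squnion>x\<in>C. ennreal (f x))"
    proof (rule ennreal_le_epsilon)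
      fix e :: real assume e: "0 < e"
      have "x \<in> mtopology closure_of C" "e / (K + 1) > 0"
        using assms(2) x e \<open>K \<ge> 0\<close> by auto
      then obtain c where c: "c \<in> C" "d x c < e / (K + 1)"
        unfolding metric_closure_of by fastforce
      have "K * d x c \<le> (K + 1) * d x c"
        using nonneg[of x c] by (intro mult_right_mono) auto
      also have "\<dots> \<le> e"
        using c(2) \<open>K \<ge> 0\<close> by (simp add: field_simps)
      finally have "K * d x c \<le> e" .
      with lip[OF x, of c] c(1) assms(1) have "ennreal (f x) \<le> ennreal (f c) + ennreal e"
        using e by (intro ennreal_le_plus_ennreal) auto
      also have "\<dots> \<le> (\<Squnion>x\<in>C. ennreal (f x)) + ennreal e"
        using c(1) by (intro add_mono SUP_upper) auto
      finally show "ennreal (f x) \<le> (\<Squnion>x\<in>C. ennreal (f x)) + ennreal e" .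
    qed
  qed
  show "(\<Squnion>x\<in>C. ennreal (f x)) \<le> (\<Squnion>x\<in>M. ennreal (f x))"
    using assms(1) by (rule SUP_subset_mono) auto
qed

lemma borel_measurable_SUP_ennreal_separable:
  assumes "separable_space mtopology" "K \<ge> 0"
    and meas: "\<And>x. x \<in> M \<Longrightarrow> f x \<in> borel_measurable N"
    and lip: "\<And>x y \<omega>. x \<in> M \<Longrightarrow> y \<in> M \<Longrightarrow> \<omega> \<in> space N \<Longrightarrow> f x \<omega> \<le> f y \<omega> + K * d x y"
  shows "(\<lambda>\<omega>. \<Squnion>x\<in>M. ennreal (f x \<omega>)) \<in> borel_measurable N"
proof -
  obtain C where C: "countable C" "C \<subseteq> M" "mtopology closure_of C = M"
    using assms(1) unfolding separable_space_def by auto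
  have dense_SUP: "(\<Squnion>x\<in>M. ennreal (f x \<omega>)) = (\<Squnion>x\<in>C. ennreal (f x \<omega>))"
    if "\<omega> \<in> space N" for \<omega>
    using C(2,3) \<open>K \<ge> 0\<close> by (rule SUP_ennreal_closure_eq) (use lip that in auto)
  have "(\<lambda>\<omega>. \<Squnion>x\<in>C. ennreal (f x \<omega>)) \<in> borel_measurable N"
    using C meas by (intro borel_measurable_SUP) auto
  then show ?thesis
    using dense_SUP by (subst measurable_cong[where g = "\<lambda>\<omega>. \<Squnion>x\<in>C. ennreal (f x \<omega>)"]) auto
qed

lemma SUP_ennreal_ge_imp_net_point:
  assumes "finite A" "A \<subseteq> M" "\<forall>x\<in>M. \<exists>a\<in>A. d a x \<le> r" "K \<ge> 0" "\<epsilon> > 0"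
    and lip: "\<And>x y. x \<in> M \<Longrightarrow> y \<in> M \<Longrightarrow> f x \<le> f y + K * d x y"
    and ge: "ennreal \<epsilon> \<le> (\<Squnion>x\<in>M. ennreal (f x))"
  shows "\<exists>a\<in>A. \<epsilon> - K * r \<le> f a"
proof -
  have "(\<Squnion>x\<in>M. ennreal (f x)) \<le> (\<Squnion>a\<in>A. ennreal (f a + K * r))"
  proof (rule SUP_least)
    fix x assume x: "x \<in> M"
    then obtain a where a: "a \<in> A" "d a x \<le> r"
      using assms(3) by auto
    have "f x \<le> f a + K * d x a"
      using a x assms(2) by (intro lip) auto
    also have "\<dots> \<le> f a + K * r"
      using a(2) \<open>K \<ge> 0\<close> commute[of x a] by (simp add: mult_left_mono)
    finally show "ennreal (f x) \<le> (\<Squnion>a\<in>A. ennreal (f a + K * r))"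
      using a(1) by (intro SUP_upper2 ennreal_leI)
  qed
  with ge have le: "ennreal \<epsilon> \<le> (\<Squnion>a\<in>A. ennreal (f a + K * r))"
    by (rule order_trans)
  then have "A \<noteq> {}"
    using \<open>\<epsilon> > 0\<close> by (auto simp: bot_ennreal)
  then have "(\<Squnion>a\<in>A. ennreal (f a + K * r)) \<in> (\<lambda>a. ennreal (f a + K * r)) ` A"
    using \<open>finite A\<close> by (simp add: cSup_eq_Max)
  then obtain a where a: "a \<in> A" "ennreal \<epsilon> \<le> ennreal (f a + K * r)"
    using le by auto
  with \<open>\<epsilon> > 0\<close> have "\<epsilon> \<le> f a + K * r"
    by (auto simp: ennreal_le_iff2)
  with a(1) show ?thesis
    by (auto intro!: bexI[of _ a])
qed

lemma emeasure_SUP_ge_le_covering_number: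
  assumes "K \<ge> 0" "\<epsilon> > 0" "p > 0"
    and meas: "\<And>x. x \<in> M \<Longrightarrow> f x \<in> borel_measurable N"
    and lip: "\<And>x y \<omega>. x \<in> M \<Longrightarrow> y \<in> M \<Longrightarrow> \<omega> \<in> space N \<Longrightarrow> f x \<omega> \<le> f y \<omega> + K * d x y"
    and tail: "\<And>x. x \<in> M \<Longrightarrow> emeasure N {\<omega> \<in> space N. \<epsilon> - K * r \<le> f x \<omega>} \<le> p"
  shows "emeasure N {\<omega> \<in> space N. ennreal \<epsilon> \<le> (\<Squnion>x\<in>M. ennreal (f x \<omega>))}
           \<le> ennreal_of_enat (covering_number M d r) * p"
proof (cases "covering_number M d r")
  case infinity
  then show ?thesis
    using \<open>p > 0\<close> by simp
next
  case (enat n)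
  then obtain A where A: "A \<subseteq> M" "finite A" "card A \<le> n" "\<forall>x\<in>M. \<exists>a\<in>A. d a x \<le> r"
    by (rule covering_number_enatE)
  define T where "T a = {\<omega> \<in> space N. \<epsilon> - K * r \<le> f a \<omega>}" for a
  have T_sets: "T a \<in> sets N" if "a \<in> A" for a
  proof -
    have [measurable]: "f a \<in> borel_measurable N"
      using meas that A(1) by auto
    show ?thesis
      unfolding T_def by measurable
  qed
  have "{\<omega> \<in> space N. ennreal \<epsilon> \<le> (\<Squnion>x\<in>M. ennreal (f x \<omega>))} \<subseteq> (\<Union>a\<in>A. T a)"
  proof
    fix \<omega> assume \<omega>: "\<omega> \<in> {\<omega> \<in> space N. ennreal \<epsilon> \<le> (\<Squnion>x\<in>M. ennreal (f x \<omega>))}"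
    then have lip_\<omega>: "\<And>x y. x \<in> M \<Longrightarrow> y \<in> M \<Longrightarrow> f x \<omega> \<le> f y \<omega> + K * d x y"
      and "ennreal \<epsilon> \<le> (\<Squnion>x\<in>M. ennreal (f x \<omega>))"
      using lip by auto
    then obtain a where "a \<in> A" "\<epsilon> - K * r \<le> f a \<omega>"
      using SUP_ennreal_ge_imp_net_point[OF A(2,1,4) \<open>K \<ge> 0\<close> \<open>\<epsilon> > 0\<close> lip_\<omega>] by blast
    with \<omega> show "\<omega> \<in> (\<Union>a\<in>A. T a)"
      unfolding T_def by auto
  qed
  then have "emeasure N {\<omega> \<in> space N. ennreal \<epsilon> \<le> (\<Squnion>x\<in>M. ennreal (f x \<omega>))}
      \<le> emeasure N (\<Union>a\<in>A. T a)"
    by (rule emeasure_mono) (use A(2) T_sets in auto)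
  also have "\<dots> \<le> (\<Sum>a\<in>A. emeasure N (T a))"
    by (rule emeasure_subadditive_finite) (use A(2) T_sets in auto)
  also have "\<dots> \<le> (\<Sum>a\<in>A. p)"
    using tail A(1) unfolding T_def by (intro sum_mono) auto
  also have "\<dots> \<le> of_nat n * p"
    using A(3) by (simp add: mult_right_mono)
  finally show ?thesis
    using enat by simp
qed

end

lemma (in prob_space) borel_measurable_SUP_abs_centered:
  fixes Z :: "'e \<Rightarrow> 'a \<Rightarrow> real" and \<delta> :: "'e \<Rightarrow> 'e \<Rightarrow> real"
  assumes "Metric_space E \<delta>" "separable_space (Metric_space.mtopology E \<delta>)" "L \<ge> 0"
    and Z_int: "\<And>x. x \<in> E \<Longrightarrow> integrable M (Z x)"
    and Z_lip: "\<And>x y \<omega>. x \<in> E \<Longrightarrow> y \<in> E \<Longrightarrow> \<omega> \<in> space M \<Longrightarrow> \<bar>Z x \<omega> - Z y \<omega>\<bar> \<le> L * \<delta> x y"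
  shows "(\<lambda>\<omega>. \<Squnion>x\<in>E. ennreal \<bar>Z x \<omega> - expectation (Z x)\<bar>) \<in> borel_measurable M"
proof (rule Metric_space.borel_measurable_SUP_ennreal_separable[OF assms(1,2)])
  show "(\<lambda>\<omega>. \<bar>Z x \<omega> - expectation (Z x)\<bar>) \<in> borel_measurable M" if "x \<in> E" for x
    using borel_measurable_integrable[OF Z_int[OF that]] by measurable
  show "\<bar>Z x \<omega> - expectation (Z x)\<bar> \<le> \<bar>Z y \<omega> - expectation (Z y)\<bar> + (2 * L) * \<delta> x y"
    if "x \<in> E" "y \<in> E" "\<omega> \<in> space M" for x y \<omega>
    using abs_centered_le_abs_centered_add[OF Z_int Z_int Z_lip] that by (simp add: mult.assoc)
qed (use \<open>L \<ge> 0\<close> in simp)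

lemma (in prob_space) emeasure_SUP_abs_centered_ge_le:
  fixes Z :: "'e \<Rightarrow> 'a \<Rightarrow> real" and \<delta> :: "'e \<Rightarrow> 'e \<Rightarrow> real"
  assumes "Metric_space E \<delta>" "L > 0" "\<epsilon> > 0" "p > 0"
    and Z_int: "\<And>x. x \<in> E \<Longrightarrow> integrable M (Z x)"
    and Z_lip: "\<And>x y \<omega>. x \<in> E \<Longrightarrow> y \<in> E \<Longrightarrow> \<omega> \<in> space M \<Longrightarrow> \<bar>Z x \<omega> - Z y \<omega>\<bar> \<le> L * \<delta> x y"
    and tail: "\<And>x. x \<in> E \<Longrightarrow> emeasure M {\<omega> \<in> space M. \<epsilon> / 2 \<le> \<bar>Z x \<omega> - expectation (Z x)\<bar>} \<le> p"
  shows "emeasure M {\<omega> \<in> space M. ennreal \<epsilon> \<le> (\<Squnion>x\<in>E. ennreal \<bar>Z x \<omega> - expectation (Z x)\<bar>)}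
           \<le> ennreal_of_enat (covering_number E \<delta> (\<epsilon> / (4 * L))) * p"
proof (rule Metric_space.emeasure_SUP_ge_le_covering_number[OF assms(1), where K = "2 * L"])
  show "(\<lambda>\<omega>. \<bar>Z x \<omega> - expectation (Z x)\<bar>) \<in> borel_measurable M" if "x \<in> E" for x
    using borel_measurable_integrable[OF Z_int[OF that]] by measurable
  show "\<bar>Z x \<omega> - expectation (Z x)\<bar> \<le> \<bar>Z y \<omega> - expectation (Z y)\<bar> + 2 * L * \<delta> x y"
    if "x \<in> E" "y \<in> E" "\<omega> \<in> space M" for x y \<omega>
    using abs_centered_le_abs_centered_add[OF Z_int Z_int Z_lip] that by (simp add: mult.assoc)
  have half: "\<epsilon> - 2 * L * (\<epsilon> / (4 * L)) = \<epsilon> / 2"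
    using \<open>L > 0\<close> by (simp add: field_simps)
  show "emeasure M {\<omega> \<in> space M. \<epsilon> - 2 * L * (\<epsilon> / (4 * L)) \<le> \<bar>Z x \<omega> - expectation (Z x)\<bar>} \<le> p"
    if "x \<in> E" for x
    unfolding half by (rule tail[OF that])
qed (use assms(2-4) in simp_all)

theorem lemma3p18:
  fixes E :: "'e set" and \<delta> :: "'e \<Rightarrow> 'e \<Rightarrow> real"
    and P :: "'w measure"
    and M :: nat and \<epsilon> L D :: real
    and Y :: "'e \<Rightarrow> nat \<Rightarrow> 'w \<Rightarrow> real"
    and Z :: "'e \<Rightarrow> 'w \<Rightarrow> real"
  assumes metric: "Metric_space E \<delta>"
    and nonempty: "E \<noteq> {}"
    and separable: "separable_space (Metric_space.mtopology E \<delta>)"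
    and M_pos: "M \<ge> 1"
    and eps_pos: "\<epsilon> > 0" and L_pos: "L > 0" and D_pos: "D > 0"
    and prob: "prob_space P"
    and Y_meas: "\<And>x m. x \<in> E \<Longrightarrow> m \<in> {1..M} \<Longrightarrow> Y x m \<in> borel_measurable P"
    and Y_range: "\<And>x m \<eta>. x \<in> E \<Longrightarrow> m \<in> {1..M} \<Longrightarrow> \<eta> \<in> space P \<Longrightarrow>
                    0 \<le> Y x m \<eta> \<and> Y x m \<eta> \<le> D"
    and Y_indep: "\<And>x. x \<in> E \<Longrightarrow> prob_space.indep_vars P (\<lambda>_. borel) (Y x) {1..M}"
    and Y_lip: "\<And>x y m \<eta>. x \<in> E \<Longrightarrow> y \<in> E \<Longrightarrow> m \<in> {1..M} \<Longrightarrow> \<eta> \<in> space P \<Longrightarrow>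
                    \<bar>Y x m \<eta> - Y y m \<eta>\<bar> \<le> L * \<delta> x y"
    and Z_def: "\<And>x \<eta>. Z x \<eta> = (\<Sum>m = 1..M. Y x m \<eta>) / real M"
  shows "(\<forall>x\<in>E. integrable P (\<lambda>\<eta>. \<bar>Z x \<eta>\<bar>) \<and> (\<integral>\<eta>. \<bar>Z x \<eta>\<bar> \<partial>P) \<le> D)
       \<and> (\<lambda>\<eta>. \<Squnion>x\<in>E. ennreal \<bar>Z x \<eta> - (\<integral>\<omega>. Z x \<omega> \<partial>P)\<bar>) \<in> borel_measurable P
       \<and> emeasure P {\<eta> \<in> space P. (\<Squnion>x\<in>E. ennreal \<bar>Z x \<eta> - (\<integral>\<omega>. Z x \<omega> \<partial>P)\<bar>) \<ge> ennreal \<epsilon>}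
           \<le> 2 * ennreal_of_enat (covering_number E \<delta> (\<epsilon> / (4 * L)))
               * ennreal (exp (- (\<epsilon>\<^sup>2 * real M) / (2 * D\<^sup>2)))"
proof -
  interpret prob_space P
    by (rule prob)
  have Z_eq: "Z x = (\<lambda>\<eta>. (\<Sum>m\<in>{1..M}. Y x m \<eta>) / card {1..M})" for x
    using Z_def by auto
  have Z_meas: "Z x \<in> borel_measurable P" if "x \<in> E" for x
    unfolding Z_eq using Y_meas[OF that] by measurable
  have Z_bounded: "Z x \<eta> \<in> {0..D}" if "x \<in> E" "\<eta> \<in> space P" for x \<eta>
    unfolding Z_eq using M_pos Y_range[OF that(1) _ that(2)] by (intro mean_in_atLeastAtMost) auto
  have Z_int: "integrable P (Z x)" if "x \<in> E" for x
    using Z_meas[OF that] Z_bounded[OF that] by (intro integrable_const_bound[where B = D]) auto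
  have Z_lip: "\<bar>Z x \<eta> - Z y \<eta>\<bar> \<le> L * \<delta> x y" if "x \<in> E" "y \<in> E" "\<eta> \<in> space P" for x y \<eta>
    unfolding Z_eq using M_pos that by (intro abs_mean_diff_le Y_lip) auto
  define c where "c = exp (- (\<epsilon>\<^sup>2 * real M) / (2 * D\<^sup>2))"
  have tail: "emeasure P {\<eta> \<in> space P. \<epsilon> / 2 \<le> \<bar>Z x \<eta> - expectation (Z x)\<bar>} \<le> ennreal (2 * c)"
    if "x \<in> E" for x
  proof -
    have "prob {\<eta> \<in> space P. \<epsilon> / 2 \<le> \<bar>Z x \<eta> - expectation (Z x)\<bar>}
        \<le> 2 * exp (-2 * real (card {1..M}) * (\<epsilon> / 2)\<^sup>2 / (D - 0)\<^sup>2)"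
      unfolding Z_eq
      by (rule Hoeffding_sample_mean_abs_ge)
        (use Y_indep[OF that] Y_range[OF that] M_pos eps_pos D_pos in \<open>auto intro!: AE_I2\<close>)
    also have "\<dots> = 2 * c"
      unfolding c_def by (simp add: power2_eq_square field_simps)
    finally show ?thesis
      unfolding emeasure_eq_measure by (rule ennreal_leI)
  qed
  have Z_abs_integral: "\<forall>x\<in>E. integrable P (\<lambda>\<eta>. \<bar>Z x \<eta>\<bar>) \<and> (\<integral>\<eta>. \<bar>Z x \<eta>\<bar> \<partial>P) \<le> D"
    using Z_int Z_bounded by (auto intro!: integral_le_const AE_I2)
  have "emeasure P {\<eta> \<in> space P. ennreal \<epsilon> \<le> (\<Squnion>x\<in>E. ennreal \<bar>Z x \<eta> - expectation (Z x)\<bar>)}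
      \<le> ennreal_of_enat (covering_number E \<delta> (\<epsilon> / (4 * L))) * ennreal (2 * c)"
    using metric L_pos eps_pos Z_int Z_lip tail
    by (intro emeasure_SUP_abs_centered_ge_le) (auto simp: c_def)
  also have "\<dots> = 2 * ennreal_of_enat (covering_number E \<delta> (\<epsilon> / (4 * L))) * ennreal c"
    by (subst ennreal_mult') (simp_all add: mult_ac)
  finally show ?thesis
    using Z_abs_integral borel_measurable_SUP_abs_centered[OF metric separable _ Z_int Z_lip] L_pos
    unfolding c_def by simp
qed

end
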